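(* Let $A, B, C, F \in \mathbb{R}^{n\times n}$ with $C$ invertible, and consider the matrix equation $$AX + B\lvert CX\rvert = F$$ in the unknown $X \in \mathbb{R}^{n\times n}$. Let $I$ be the $n\times n$ identity matrix and set $R = I\otimes AC^{-1}$ and $S = I\otimes B$. Suppose each diagonal entry of $R+S$ has the same sign as the corresponding diagonal entry of $R-S$. Then the equation has exactly one solution if either of the following holds: (i) $R+S$ and $R-S$ are both strictly diagonally dominant by columns; (ii) $R+S$, $R-S$ and all column representative matrices of $\{R+S, R-S\}$ are irreducibly diagonally dominant by columns.
   Context: $\otimes$ denotes the Kronecker product and $\lvert M\rvert$ the entrywise absolute value. For a set $\{M_1,M_2\}$ of $N\times N$ matrices, a column representative is a matrix whose $j$-th column is either the $j$-th column of $M_1$ or the $j$-th column of $M_2$, for each $j=1,\dots,N$. *)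

theory Defs
  imports "HOL-Analysis.Analysis"
begin

definition mat_abs :: "real^'n^'m \<Rightarrow> real^'n^'m" where
  "mat_abs M = (\<chi> i j. \<bar>M $ i $ j\<bar>)"

text \<open>Kronecker product; row index (i,k), column index (j,l) (lexicographic block indexing).\<close>
definition kron :: "real^'b^'a \<Rightarrow> real^'d^'c \<Rightarrow> real^('b \<times> 'd)^('a \<times> 'c)" where
  "kron P Q = (\<chi> ik jl. P $ fst ik $ fst jl * Q $ snd ik $ snd jl)"

definition col_diag_dom :: "real^'n^'n \<Rightarrow> bool" where
  "col_diag_dom M \<longleftrightarrow> (\<forall>j. \<bar>M $ j $ j\<bar> \<ge> (\<Sum>i\<in>UNIV - {j}. \<bar>M $ i $ j\<bar>))"

definition strict_col_diag_dom :: "real^'n^'n \<Rightarrow> bool" where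
  "strict_col_diag_dom M \<longleftrightarrow> (\<forall>j. \<bar>M $ j $ j\<bar> > (\<Sum>i\<in>UNIV - {j}. \<bar>M $ i $ j\<bar>))"

text \<open>Reducible: there is a nonempty proper index set J with M i j = 0 for i in J, j not in J
  (i.e. M is permutation-similar to a block triangular matrix).\<close>
definition irreducible_mat :: "real^'n^'n \<Rightarrow> bool" where
  "irreducible_mat M \<longleftrightarrow>
     \<not> (\<exists>J. J \<noteq> {} \<and> J \<noteq> UNIV \<and> (\<forall>i\<in>J. \<forall>j\<in>UNIV - J. M $ i $ j = 0))"

definition irred_col_diag_dom :: "real^'n^'n \<Rightarrow> bool" where
  "irred_col_diag_dom M \<longleftrightarrow> irreducible_mat M \<and> col_diag_dom M \<and>
     (\<exists>j. \<bar>M $ j $ j\<bar> > (\<Sum>i\<in>UNIV - {j}. \<bar>M $ i $ j\<bar>))"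

definition column_reps :: "real^'n^'m \<Rightarrow> real^'n^'m \<Rightarrow> (real^'n^'m) set" where
  "column_reps M1 M2 = {M. \<forall>j. column j M = column j M1 \<or> column j M = column j M2}"

end

theory Submission
  imports Defs
begin

(* With M = A C^-1 and Y = C X the equation becomes M Y + B |Y| = F.  Its diagonal part
   h(Y)_ic = m_ii y_ic + b_ii |y_ic| is an entrywise bijection, because the sign hypothesis
   gives |b_ii| < |m_ii|; the rest N(Y) only involves off-diagonal entries.  Solutions
   correspond to fixed points Z = h(Y) of Z \<mapsto> F - N(h^-1 Z), which is a contraction for the
   entrywise l1 distance: if |w| \<le> |u| then m u + b w = a (m + b) + a' (m - b) with
   a a' \<ge> 0, so strict column dominance of M + B and M - B bounds each off-diagonal
   column of N by k < 1 times its diagonal entry.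
   Since I \<otimes> K is block diagonal, it is reducible as soon as n \<ge> 2; hypothesis (ii) can
   therefore only hold for n = 1, where it amounts to (i). *)

lemma banach_fix_dominated:
  fixes T :: "'a::complete_space \<Rightarrow> 'a" and d :: "'a \<Rightarrow> 'a \<Rightarrow> real"
  assumes dist_le: "\<And>x y. dist x y \<le> d x y" and le_dist: "\<And>x y. d x y \<le> K * dist x y"
    and "0 \<le> k" "k < 1" and contr: "\<And>x y. d (T x) (T y) \<le> k * d x y"
  shows "\<exists>!x. T x = x"
proof -
  define K' where "K' = max K 0"
  have iter: "d ((T ^^ m) x) ((T ^^ m) y) \<le> k ^ m * d x y" for m x y
  proof (induction m)
    case (Suc m)
    have "d ((T ^^ Suc m) x) ((T ^^ Suc m) y) \<le> k * d ((T ^^ m) x) ((T ^^ m) y)"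
      using contr by simp
    also have "\<dots> \<le> k ^ Suc m * d x y"
      using Suc \<open>0 \<le> k\<close> by (simp add: mult_left_mono mult.assoc)
    finally show ?case .
  qed simp
  have "(\<lambda>m. k ^ m * K') \<longlonglongrightarrow> 0"
    using \<open>0 \<le> k\<close> \<open>k < 1\<close> by (intro tendsto_mult_left_zero LIMSEQ_power_zero) auto
  then obtain m where m: "k ^ m * K' < 1"
    using eventually_sequentially order_tendstoD(2)[of _ 0 sequentially 1] by fastforce
  have lipschitz: "\<forall>x y. dist ((T ^^ m) x) ((T ^^ m) y) \<le> k ^ m * K' * dist x y"
  proof (intro allI)
    fix x y
    have "d x y \<le> K' * dist x y"
      using le_dist[of x y] mult_right_mono[of K K' "dist x y"] by (auto simp: K'_def)
    have "dist ((T ^^ m) x) ((T ^^ m) y) \<le> d ((T ^^ m) x) ((T ^^ m) y)"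
      by (rule dist_le)
    also have "\<dots> \<le> k ^ m * d x y"
      by (rule iter)
    also have "\<dots> \<le> k ^ m * K' * dist x y"
      using \<open>d x y \<le> K' * dist x y\<close> \<open>0 \<le> k\<close> by (simp add: mult_left_mono mult.assoc)
    finally show "dist ((T ^^ m) x) ((T ^^ m) y) \<le> k ^ m * K' * dist x y" .
  qed
  have "0 \<le> k ^ m * K'"
    using \<open>0 \<le> k\<close> by (simp add: K'_def)
  then have "\<exists>!z. (T ^^ m) z = z"
    by (rule banach_fix_type[OF _ m lipschitz])
  then obtain z where z: "(T ^^ m) z = z" and unique: "\<And>y. (T ^^ m) y = y \<Longrightarrow> y = z"
    by blast
  have "T z = z"
    using unique[of "T z"] z by (metis funpow_swap1)
  moreover have "(T ^^ m) y = y" if "T y = y" for y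
    using that by (induction m) auto
  ultimately show ?thesis
    using unique by blast
qed

lemma ex1_bij_comp_iff:
  assumes "bij f"
  shows "(\<exists>!x. P (f x)) \<longleftrightarrow> (\<exists>!y. P y)"
  using assms by (metis bij_pointE)

definition mat_l1_dist :: "real^'n^'m \<Rightarrow> real^'n^'m \<Rightarrow> real" where
  "mat_l1_dist X Y = (\<Sum>i\<in>UNIV. \<Sum>j\<in>UNIV. \<bar>X$i$j - Y$i$j\<bar>)"

lemma dist_le_mat_l1_dist: "dist X Y \<le> mat_l1_dist X Y"
proof -
  have "dist X Y \<le> (\<Sum>i\<in>UNIV. norm ((X - Y)$i))"
    unfolding dist_norm norm_vec_def by (rule L2_set_le_sum) simp
  also have "\<dots> \<le> (\<Sum>i\<in>UNIV. \<Sum>j\<in>UNIV. \<bar>(X - Y)$i$j\<bar>)"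
    by (intro sum_mono norm_le_l1_cart)
  finally show ?thesis
    by (simp add: mat_l1_dist_def)
qed

lemma mat_l1_dist_le_dist:
  fixes X Y :: "real^'n^'m"
  shows "mat_l1_dist X Y \<le> real CARD('m) * real CARD('n) * dist X Y"
proof -
  have "\<bar>X$i$j - Y$i$j\<bar> \<le> dist X Y" for i j
    using component_le_norm_cart[where x = "(X - Y)$i" and i = j]
      Finite_Cartesian_Product.norm_nth_le[where x = "X - Y" and i = i]
    by (simp add: dist_norm)
  then have "mat_l1_dist X Y \<le> (\<Sum>i\<in>(UNIV::'m set). \<Sum>j\<in>(UNIV::'n set). dist X Y)"
    unfolding mat_l1_dist_def by (intro sum_mono)
  then show ?thesis
    by (simp add: mult.assoc)
qed

lemma mat_l1_dist_diff_left: "mat_l1_dist (F - X) (F - Y) = mat_l1_dist X Y"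
  unfolding mat_l1_dist_def by (simp add: abs_minus_commute)

lemma banach_fix_mat_l1:
  fixes T :: "real^'n^'m \<Rightarrow> real^'n^'m"
  assumes "0 \<le> k" "k < 1" "\<And>X Y. mat_l1_dist (T X) (T Y) \<le> k * mat_l1_dist X Y"
  shows "\<exists>!X. T X = X"
  by (rule banach_fix_dominated[where d = mat_l1_dist, OF dist_le_mat_l1_dist mat_l1_dist_le_dist assms])

lemma ex1_bij_plus_mat_l1_contraction:
  fixes h N :: "'a \<Rightarrow> real^'n^'m"
  assumes "bij h" "0 \<le> k" "k < 1"
    and contr: "\<And>Y V. mat_l1_dist (N Y) (N V) \<le> k * mat_l1_dist (h Y) (h V)"
  shows "\<exists>!Y. h Y + N Y = F"
proof -
  define T where "T Z = F - N (inv h Z)" for Z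
  have "mat_l1_dist (T Z) (T W) \<le> k * mat_l1_dist Z W" for Z W
    using contr[of "inv h Z" "inv h W"] \<open>bij h\<close>
    by (simp add: T_def mat_l1_dist_diff_left bij_is_surj surj_f_inv_f)
  then have "\<exists>!Z. T Z = Z"
    using banach_fix_mat_l1 \<open>0 \<le> k\<close> \<open>k < 1\<close> by blast
  moreover have "T (h Y) = h Y \<longleftrightarrow> h Y + N Y = F" for Y
    using \<open>bij h\<close> by (auto simp: T_def bij_is_inj algebra_simps)
  ultimately show ?thesis
    using ex1_bij_comp_iff[OF \<open>bij h\<close>, of "\<lambda>Z. T Z = Z"] by simp
qed

lemma mult_plus_abs_mult_diff_ge:
  fixes a b y z :: real
  shows "(\<bar>a\<bar> - \<bar>b\<bar>) * \<bar>y - z\<bar> \<le> \<bar>(a * y + b * \<bar>y\<bar>) - (a * z + b * \<bar>z\<bar>)\<bar>"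
proof -
  have "\<bar>b * (\<bar>y\<bar> - \<bar>z\<bar>)\<bar> \<le> \<bar>b\<bar> * \<bar>y - z\<bar>"
    by (simp add: abs_mult mult_left_mono abs_triangle_ineq3)
  moreover have "(a * y + b * \<bar>y\<bar>) - (a * z + b * \<bar>z\<bar>) = a * (y - z) + b * (\<bar>y\<bar> - \<bar>z\<bar>)"
    by (simp add: algebra_simps)
  moreover have "\<bar>a * (y - z)\<bar> - \<bar>b * (\<bar>y\<bar> - \<bar>z\<bar>)\<bar> \<le> \<bar>a * (y - z) + b * (\<bar>y\<bar> - \<bar>z\<bar>)\<bar>"
    by arith
  ultimately show ?thesis
    by (simp add: abs_mult left_diff_distrib)
qed

lemma bij_mult_plus_abs_mult:
  fixes a b :: real
  assumes "\<bar>b\<bar> < \<bar>a\<bar>"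
  shows "bij (\<lambda>y. a * y + b * \<bar>y\<bar>)"
proof (rule bijI)
  show "inj (\<lambda>y. a * y + b * \<bar>y\<bar>)"
  proof (rule injI)
    fix y z assume "a * y + b * \<bar>y\<bar> = a * z + b * \<bar>z\<bar>"
    then have "(\<bar>a\<bar> - \<bar>b\<bar>) * \<bar>y - z\<bar> \<le> 0"
      using mult_plus_abs_mult_diff_ge[of a b y z] by simp
    then show "y = z"
      using assms by (simp add: mult_le_0_iff)
  qed
  have "\<bar>b\<bar> * \<bar>b\<bar> < \<bar>a\<bar> * \<bar>a\<bar>"
    using assms by (intro mult_strict_mono) auto
  then have same_sign: "(a + b) * (a - b) > 0"
    by (simp add: algebra_simps)
  then have nonzero: "a + b \<noteq> 0" "a - b \<noteq> 0"
    by auto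
  show "surj (\<lambda>y. a * y + b * \<bar>y\<bar>)"
  proof (rule surjI)
    fix x
    define y where "y = (if x / (a + b) \<ge> 0 then x / (a + b) else x / (a - b))"
    show "a * y + b * \<bar>y\<bar> = x"
    proof (cases "x / (a + b) \<ge> 0")
      case True
      then have "0 \<le> y"
        by (simp add: y_def)
      then have "a * y + b * \<bar>y\<bar> = (a + b) * y"
        by (simp add: algebra_simps)
      also have "\<dots> = x"
        using True nonzero by (simp add: y_def)
      finally show ?thesis .
    next
      case False
      have "x / (a - b) = x / (a + b) * ((a + b) / (a - b))"
        using nonzero by simp
      moreover have "(a + b) / (a - b) > 0"
        using same_sign by (simp add: zero_less_divide_iff zero_less_mult_iff)
      ultimately have "x / (a - b) < 0"
        using False by (metis mult_neg_pos not_le)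
      then have "y < 0"
        using False by (simp add: y_def)
      then have "a * y + b * \<bar>y\<bar> = (a - b) * y"
        by (simp add: algebra_simps)
      also have "\<dots> = x"
        using False nonzero by (simp add: y_def)
      finally show ?thesis .
    qed
  qed
qed

lemma abs_less_abs_if_sgn_eq:
  fixes a b :: real
  assumes "sgn (a + b) = sgn (a - b)" and "a + b \<noteq> 0"
  shows "\<bar>b\<bar> < \<bar>a\<bar>"
  using assms by (auto simp: sgn_if split: if_splits)

definition offdiag :: "real^'n^'n \<Rightarrow> real^'n^'n" where
  "offdiag M = (\<chi> i j. if i = j then 0 else M$i$j)"

definition diag_abs_part :: "real^'n^'n \<Rightarrow> real^'n^'n \<Rightarrow> real^'m^'n \<Rightarrow> real^'m^'n" where
  "diag_abs_part M B Y = (\<chi> i c. M$i$i * Y$i$c + B$i$i * \<bar>Y$i$c\<bar>)"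

lemma mat_abs_nth [simp]: "mat_abs Y $ i $ j = \<bar>Y $ i $ j\<bar>"
  by (simp add: mat_abs_def)

lemma matrix_mult_offdiag_nth: "(M ** Y)$i$c = M$i$i * Y$i$c + (offdiag M ** Y)$i$c"
proof -
  have "(M ** Y)$i$c = (\<Sum>k\<in>UNIV. (if k = i then M$i$i * Y$i$c else 0) + offdiag M$i$k * Y$k$c)"
    by (auto simp: matrix_matrix_mult_def offdiag_def intro!: sum.cong)
  then show ?thesis
    by (simp add: sum.distrib matrix_matrix_mult_def)
qed

lemma mult_plus_abs_mult_split:
  "M ** Y + B ** mat_abs Y = diag_abs_part M B Y + (offdiag M ** Y + offdiag B ** mat_abs Y)"
  by (simp add: vec_eq_iff matrix_mult_offdiag_nth[of M] matrix_mult_offdiag_nth[of B] diag_abs_part_def)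

lemma bij_diag_abs_part:
  assumes "\<And>i. \<bar>B$i$i\<bar> < \<bar>M$i$i\<bar>"
  shows "bij (diag_abs_part M B :: real^'m^'n \<Rightarrow> real^'m^'n)"
proof -
  define f where "f i y = M$i$i * y + B$i$i * \<bar>y\<bar>" for i y
  have bij_f: "bij (f i)" for i
    unfolding f_def using assms by (rule bij_mult_plus_abs_mult)
  define g :: "real^'m^'n \<Rightarrow> real^'m^'n" where "g Z = (\<chi> i c. inv (f i) (Z$i$c))" for Z
  have "g \<circ> diag_abs_part M B = id" "diag_abs_part M B \<circ> g = id"
    using bij_f by (simp_all add: fun_eq_iff vec_eq_iff g_def diag_abs_part_def
        f_def [symmetric] bij_is_inj bij_is_surj surj_f_inv_f)
  then show ?thesis
    by (rule o_bij)
qed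

lemma abs_add_eq_if_mult_nonneg: "0 \<le> x * y \<Longrightarrow> \<bar>x + y\<bar> = \<bar>x\<bar> + \<bar>(y::real)\<bar>"
  by (auto simp: zero_le_mult_iff)

lemma offdiag_column_abs_le:
  fixes M B :: "real^'n^'n"
  assumes "\<bar>w\<bar> \<le> \<bar>u\<bar>" and "\<bar>B$j$j\<bar> \<le> \<bar>M$j$j\<bar>"
    and dom_plus: "(\<Sum>i\<in>UNIV - {j}. \<bar>(M + B)$i$j\<bar>) \<le> k * \<bar>(M + B)$j$j\<bar>"
    and dom_minus: "(\<Sum>i\<in>UNIV - {j}. \<bar>(M - B)$i$j\<bar>) \<le> k * \<bar>(M - B)$j$j\<bar>"
  shows "(\<Sum>i\<in>UNIV - {j}. \<bar>M$i$j * u + B$i$j * w\<bar>) \<le> k * \<bar>M$j$j * u + B$j$j * w\<bar>"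
proof -
  define a b where "a = (u + w) / 2" and "b = (u - w) / 2"
  have decomp: "M$i$j * u + B$i$j * w = a * (M + B)$i$j + b * (M - B)$i$j" for i
    by (simp add: a_def b_def field_simps)
  have "w * w \<le> u * u"
    using assms(1) by (metis abs_ge_zero abs_mult_self_eq mult_mono)
  then have "0 \<le> a * b"
    by (simp add: a_def b_def field_simps)
  moreover have "0 \<le> (M + B)$j$j * (M - B)$j$j"
    using assms(2) mult_mono[OF assms(2) assms(2)] by (simp add: algebra_simps)
  ultimately have same_sign: "0 \<le> (a * (M + B)$j$j) * (b * (M - B)$j$j)"
    by (metis mult.assoc mult.left_commute zero_le_mult_iff mult_nonneg_nonneg)
  have "(\<Sum>i\<in>UNIV - {j}. \<bar>M$i$j * u + B$i$j * w\<bar>)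
      \<le> (\<Sum>i\<in>UNIV - {j}. \<bar>a\<bar> * \<bar>(M + B)$i$j\<bar> + \<bar>b\<bar> * \<bar>(M - B)$i$j\<bar>)"
    unfolding decomp by (intro sum_mono) (metis abs_mult abs_triangle_ineq)
  also have "\<dots> = \<bar>a\<bar> * (\<Sum>i\<in>UNIV - {j}. \<bar>(M + B)$i$j\<bar>)
      + \<bar>b\<bar> * (\<Sum>i\<in>UNIV - {j}. \<bar>(M - B)$i$j\<bar>)"
    by (simp add: sum.distrib sum_distrib_left)
  also have "\<dots> \<le> \<bar>a\<bar> * (k * \<bar>(M + B)$j$j\<bar>) + \<bar>b\<bar> * (k * \<bar>(M - B)$j$j\<bar>)"
    using dom_plus dom_minus by (intro add_mono mult_left_mono) auto
  also have "\<dots> = k * (\<bar>a * (M + B)$j$j\<bar> + \<bar>b * (M - B)$j$j\<bar>)"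
    by (simp only: abs_mult) (simp add: algebra_simps)
  also have "\<dots> = k * \<bar>M$j$j * u + B$j$j * w\<bar>"
    unfolding decomp abs_add_eq_if_mult_nonneg[OF same_sign] ..
  finally show ?thesis .
qed

lemma sum_UNIV_offdiag:
  fixes f :: "'a::finite \<Rightarrow> 'b::comm_monoid_add"
  shows "(\<Sum>i\<in>UNIV. if i = j then 0 else f i) = (\<Sum>i\<in>UNIV - {j}. f i)"
  by (subst sum.remove [of UNIV j]) (auto intro: sum.cong)

lemma mat_l1_dist_offdiag_le:
  fixes M B :: "real^'n^'n" and Y V :: "real^'m^'n"
  assumes diag: "\<And>j. \<bar>B$j$j\<bar> \<le> \<bar>M$j$j\<bar>"
    and dom_plus: "\<And>j. (\<Sum>i\<in>UNIV - {j}. \<bar>(M + B)$i$j\<bar>) \<le> k * \<bar>(M + B)$j$j\<bar>"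
    and dom_minus: "\<And>j. (\<Sum>i\<in>UNIV - {j}. \<bar>(M - B)$i$j\<bar>) \<le> k * \<bar>(M - B)$j$j\<bar>"
  shows "mat_l1_dist (offdiag M ** Y + offdiag B ** mat_abs Y) (offdiag M ** V + offdiag B ** mat_abs V)
    \<le> k * mat_l1_dist (diag_abs_part M B Y) (diag_abs_part M B V)"
proof -
  define u w where "u j c = Y$j$c - V$j$c" and "w j c = \<bar>Y$j$c\<bar> - \<bar>V$j$c\<bar>" for j c
  define g where "g i j c = \<bar>offdiag M$i$j * u j c + offdiag B$i$j * w j c\<bar>" for i j c
  have entry: "\<bar>(offdiag M ** Y + offdiag B ** mat_abs Y)$i$c
      - (offdiag M ** V + offdiag B ** mat_abs V)$i$c\<bar> \<le> (\<Sum>j\<in>UNIV. g i j c)" for i c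
  proof -
    have "(offdiag M ** Y + offdiag B ** mat_abs Y)$i$c - (offdiag M ** V + offdiag B ** mat_abs V)$i$c
        = (\<Sum>j\<in>UNIV. offdiag M$i$j * u j c + offdiag B$i$j * w j c)"
      by (simp add: matrix_matrix_mult_def u_def w_def sum_subtractf [symmetric] sum.distrib [symmetric]
          algebra_simps)
    then show ?thesis
      unfolding g_def by (simp add: sum_abs)
  qed
  have column: "(\<Sum>i\<in>UNIV. g i j c)
      \<le> k * \<bar>diag_abs_part M B Y $j$c - diag_abs_part M B V $j$c\<bar>" for j c
  proof -
    have "(\<Sum>i\<in>UNIV. g i j c) = (\<Sum>i\<in>UNIV - {j}. \<bar>M$i$j * u j c + B$i$j * w j c\<bar>)"
      unfolding g_def offdiag_def sum_UNIV_offdiag [symmetric] by (intro sum.cong) auto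
    also have "\<dots> \<le> k * \<bar>M$j$j * u j c + B$j$j * w j c\<bar>"
      unfolding u_def w_def by (rule offdiag_column_abs_le [OF abs_triangle_ineq3 diag dom_plus dom_minus])
    also have "\<dots> = k * \<bar>diag_abs_part M B Y $j$c - diag_abs_part M B V $j$c\<bar>"
      by (simp add: diag_abs_part_def u_def w_def algebra_simps)
    finally show ?thesis .
  qed
  have "mat_l1_dist (offdiag M ** Y + offdiag B ** mat_abs Y) (offdiag M ** V + offdiag B ** mat_abs V)
      \<le> (\<Sum>i\<in>UNIV. \<Sum>c\<in>UNIV. \<Sum>j\<in>UNIV. g i j c)"
    unfolding mat_l1_dist_def by (intro sum_mono entry)
  also have "\<dots> = (\<Sum>c\<in>UNIV. \<Sum>j\<in>UNIV. \<Sum>i\<in>UNIV. g i j c)"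
    by (subst sum.swap) (rule sum.cong [OF refl], rule sum.swap)
  also have "\<dots>
      \<le> (\<Sum>c\<in>UNIV. \<Sum>j\<in>UNIV. k * \<bar>diag_abs_part M B Y $j$c - diag_abs_part M B V $j$c\<bar>)"
    by (intro sum_mono column)
  also have "\<dots> = k * mat_l1_dist (diag_abs_part M B Y) (diag_abs_part M B V)"
    unfolding mat_l1_dist_def sum_distrib_left by (rule sum.swap)
  finally show ?thesis .
qed

lemma strict_col_diag_dom_ratio:
  assumes "strict_col_diag_dom M"
  obtains k where "0 \<le> k" "k < 1" "\<And>j. (\<Sum>i\<in>UNIV - {j}. \<bar>M$i$j\<bar>) \<le> k * \<bar>M$j$j\<bar>"
proof -
  define s where "s j = (\<Sum>i\<in>UNIV - {j}. \<bar>M$i$j\<bar>)" for j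
  define k where "k = Max (range (\<lambda>j. s j / \<bar>M$j$j\<bar>))"
  have s_less: "s j < \<bar>M$j$j\<bar>" for j
    using assms unfolding strict_col_diag_dom_def s_def by blast
  moreover have s_nonneg: "0 \<le> s j" for j
    unfolding s_def by (intro sum_nonneg) auto
  ultimately have diag_pos: "0 < \<bar>M$j$j\<bar>" for j
    using le_less_trans by blast
  have le_k: "s j / \<bar>M$j$j\<bar> \<le> k" for j
    unfolding k_def by (rule Max_ge) auto
  have "k \<in> range (\<lambda>j. s j / \<bar>M$j$j\<bar>)"
    unfolding k_def by (rule Max_in) auto
  then have "k < 1"
    using s_less diag_pos by auto
  moreover have "0 \<le> k"
    using le_k s_nonneg diag_pos order_trans by (metis divide_nonneg_pos)
  moreover have "s j \<le> k * \<bar>M$j$j\<bar>" for j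
    using le_k[of j] diag_pos[of j] by (simp add: pos_divide_le_eq)
  ultimately show thesis
    using that unfolding s_def by blast
qed

lemma ex1_mult_plus_abs_mult_eq:
  fixes M B :: "real^'n^'n" and F :: "real^'m^'n"
  assumes diag: "\<And>j. \<bar>B$j$j\<bar> < \<bar>M$j$j\<bar>"
    and "strict_col_diag_dom (M + B)" "strict_col_diag_dom (M - B)"
  shows "\<exists>!Y. M ** Y + B ** mat_abs Y = F"
proof -
  obtain k1 where k1: "0 \<le> k1" "k1 < 1"
    "\<And>j. (\<Sum>i\<in>UNIV - {j}. \<bar>(M + B)$i$j\<bar>) \<le> k1 * \<bar>(M + B)$j$j\<bar>"
    using strict_col_diag_dom_ratio[OF \<open>strict_col_diag_dom (M + B)\<close>] by blast
  obtain k2 where k2: "0 \<le> k2" "k2 < 1"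
    "\<And>j. (\<Sum>i\<in>UNIV - {j}. \<bar>(M - B)$i$j\<bar>) \<le> k2 * \<bar>(M - B)$j$j\<bar>"
    using strict_col_diag_dom_ratio[OF \<open>strict_col_diag_dom (M - B)\<close>] by blast
  define k where "k = max k1 k2"
  have "0 \<le> k" "k < 1"
    using k1 k2 by (auto simp: k_def)
  have dom_plus: "(\<Sum>i\<in>UNIV - {j}. \<bar>(M + B)$i$j\<bar>) \<le> k * \<bar>(M + B)$j$j\<bar>"
    and dom_minus: "(\<Sum>i\<in>UNIV - {j}. \<bar>(M - B)$i$j\<bar>) \<le> k * \<bar>(M - B)$j$j\<bar>" for j
    using k1(3)[of j] k2(3)[of j] unfolding k_def
    by (meson abs_ge_zero max.cobounded1 max.cobounded2 mult_right_mono order_trans)+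
  have diag_le: "\<bar>B$j$j\<bar> \<le> \<bar>M$j$j\<bar>" for j
    using diag[of j] by simp
  have "\<exists>!Y. diag_abs_part M B Y + (offdiag M ** Y + offdiag B ** mat_abs Y) = F"
    using ex1_bij_plus_mat_l1_contraction[OF bij_diag_abs_part[OF diag] \<open>0 \<le> k\<close> \<open>k < 1\<close>
        mat_l1_dist_offdiag_le[OF diag_le dom_plus dom_minus]] .
  then show ?thesis
    by (simp only: mult_plus_abs_mult_split [of M _ B])
qed

lemma matrix_inv_left:
  assumes "invertible C"
  shows "matrix_inv C ** C = mat 1"
  using someI_ex[OF assms[unfolded invertible_def]] by (simp add: matrix_inv_def)

lemma matrix_inv_right:
  assumes "invertible C"
  shows "C ** matrix_inv C = mat 1"
  using someI_ex[OF assms[unfolded invertible_def]] by (simp add: matrix_inv_def)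

lemma matrix_mult_inv_cancel:
  assumes "invertible C"
  shows "(A ** matrix_inv C) ** (C ** X) = A ** X"
  by (simp add: matrix_mul_assoc [symmetric] assms)
    (simp add: matrix_mul_assoc matrix_inv_left assms)

lemma bij_matrix_mult_left:
  fixes C :: "'a::semiring_1^'n^'n"
  assumes "invertible C"
  shows "bij ((**) C :: 'a^'m^'n \<Rightarrow> 'a^'m^'n)"
  by (rule o_bij[of "(**) (matrix_inv C)"])
    (simp_all add: fun_eq_iff matrix_mul_assoc matrix_inv_left matrix_inv_right assms)

lemma kron_mat1_nth:
  "kron (mat 1 :: real^'m^'m) K $ p $ q = (if fst p = fst q then K $ snd p $ snd q else 0)"
  by (simp add: kron_def mat_def)

lemma kron_add_right: "kron P Q + kron P R = kron P (Q + R)"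
  by (simp add: kron_def vec_eq_iff distrib_left)

lemma kron_diff_right: "kron P Q - kron P R = kron P (Q - R)"
  by (simp add: kron_def vec_eq_iff right_diff_distrib)

lemma strict_col_diag_dom_kron_mat1D:
  assumes "strict_col_diag_dom (kron (mat 1 :: real^'m^'m) K)"
  shows "strict_col_diag_dom K"
  unfolding strict_col_diag_dom_def
proof
  fix j
  fix c :: 'm
  have "(\<Sum>i\<in>UNIV - {j}. \<bar>K$i$j\<bar>)
      = (\<Sum>p\<in>Pair c ` (UNIV - {j}). \<bar>kron (mat 1 :: real^'m^'m) K $ p $ (c, j)\<bar>)"
    by (subst sum.reindex) (auto simp: inj_on_def kron_mat1_nth)
  also have "\<dots> \<le> (\<Sum>p\<in>UNIV - {(c, j)}. \<bar>kron (mat 1 :: real^'m^'m) K $ p $ (c, j)\<bar>)"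
    by (rule sum_mono2) auto
  also have "\<dots> < \<bar>kron (mat 1 :: real^'m^'m) K $ (c, j) $ (c, j)\<bar>"
    using assms unfolding strict_col_diag_dom_def by blast
  also have "\<dots> = \<bar>K$j$j\<bar>"
    by (simp add: kron_mat1_nth)
  finally show "(\<Sum>i\<in>UNIV - {j}. \<bar>K$i$j\<bar>) < \<bar>K$j$j\<bar>" .
qed

lemma not_irreducible_kron_mat1:
  fixes a b :: "'m::finite" and K :: "real^'n^'n"
  assumes "a \<noteq> b"
  shows "\<not> irreducible_mat (kron (mat 1 :: real^'m^'m) K)"
proof -
  define J where "J = {p :: 'm \<times> 'n. fst p = a}"
  have "(a, c) \<in> J" "(b, c) \<notin> J" for c :: 'n
    using assms by (simp_all add: J_def)
  then have "J \<noteq> {}" "J \<noteq> UNIV"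
    by blast+
  moreover have "\<forall>p\<in>J. \<forall>q\<in>UNIV - J. kron (mat 1 :: real^'m^'m) K $ p $ q = 0"
    by (simp add: J_def kron_mat1_nth)
  ultimately show ?thesis
    unfolding irreducible_mat_def by blast
qed

lemma irred_col_diag_dom_singleton_imp_strict:
  fixes M :: "real^'a^'a"
  assumes "\<And>i j :: 'a. i = j" and "irred_col_diag_dom M"
  shows "strict_col_diag_dom M"
  using assms unfolding irred_col_diag_dom_def strict_col_diag_dom_def by (metis (full_types))

lemma irred_col_diag_dom_kron_mat1D:
  fixes K :: "real^'n^'n"
  assumes "irred_col_diag_dom (kron (mat 1 :: real^'n^'n) K)"
  shows "strict_col_diag_dom K"
proof (cases "\<exists>a b :: 'n. a \<noteq> b")
  case True
  then show ?thesis
    using assms not_irreducible_kron_mat1 unfolding irred_col_diag_dom_def by blast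
next
  case False
  then have "p = q" for p q :: "'n \<times> 'n"
    by (auto simp: prod_eq_iff)
  then have "strict_col_diag_dom (kron (mat 1 :: real^'n^'n) K)"
    using assms by (rule irred_col_diag_dom_singleton_imp_strict)
  then show ?thesis
    by (rule strict_col_diag_dom_kron_mat1D)
qed

lemma strict_col_diag_dom_diag_nonzero:
  assumes "strict_col_diag_dom M"
  shows "M$j$j \<noteq> 0"
proof -
  have "0 \<le> (\<Sum>i\<in>UNIV - {j}. \<bar>M$i$j\<bar>)"
    by (intro sum_nonneg) auto
  also have "\<dots> < \<bar>M$j$j\<bar>"
    using assms unfolding strict_col_diag_dom_def by blast
  finally show ?thesis
    by auto
qed

theorem theorem4p4:
  fixes A B C F :: "real^'n^'n"
  assumes "invertible C"
    and "\<forall>p. sgn ((kron (mat 1 :: real^'n^'n) (A ** matrix_inv C) + kron (mat 1 :: real^'n^'n) B) $ p $ p)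
            = sgn ((kron (mat 1 :: real^'n^'n) (A ** matrix_inv C) - kron (mat 1 :: real^'n^'n) B) $ p $ p)"
    and "(strict_col_diag_dom (kron (mat 1 :: real^'n^'n) (A ** matrix_inv C) + kron (mat 1 :: real^'n^'n) B)
          \<and> strict_col_diag_dom (kron (mat 1 :: real^'n^'n) (A ** matrix_inv C) - kron (mat 1 :: real^'n^'n) B))
       \<or> (irred_col_diag_dom (kron (mat 1 :: real^'n^'n) (A ** matrix_inv C) + kron (mat 1 :: real^'n^'n) B)
          \<and> irred_col_diag_dom (kron (mat 1 :: real^'n^'n) (A ** matrix_inv C) - kron (mat 1 :: real^'n^'n) B)
          \<and> (\<forall>M \<in> column_reps (kron (mat 1 :: real^'n^'n) (A ** matrix_inv C) + kron (mat 1 :: real^'n^'n) B)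
                                (kron (mat 1 :: real^'n^'n) (A ** matrix_inv C) - kron (mat 1 :: real^'n^'n) B).
               irred_col_diag_dom M))"
  shows "\<exists>!X :: real^'n^'n. A ** X + B ** mat_abs (C ** X) = F"
proof -
  define M where "M = A ** matrix_inv C"
  have "(strict_col_diag_dom (kron (mat 1 :: real^'n^'n) (M + B))
          \<and> strict_col_diag_dom (kron (mat 1 :: real^'n^'n) (M - B)))
      \<or> (irred_col_diag_dom (kron (mat 1 :: real^'n^'n) (M + B))
          \<and> irred_col_diag_dom (kron (mat 1 :: real^'n^'n) (M - B)))"
    using assms(3) unfolding M_def kron_add_right kron_diff_right by blast
  then have strict: "strict_col_diag_dom (M + B)" "strict_col_diag_dom (M - B)"
    by (metis strict_col_diag_dom_kron_mat1D irred_col_diag_dom_kron_mat1D)+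
  have "sgn (M$j$j + B$j$j) = sgn (M$j$j - B$j$j)" for j
    using assms(2)[rule_format, of "(j, j)"]
    by (simp add: M_def kron_add_right kron_diff_right kron_mat1_nth)
  then have "\<bar>B$j$j\<bar> < \<bar>M$j$j\<bar>" for j
    using strict_col_diag_dom_diag_nonzero[OF strict(1), of j] by (simp add: abs_less_abs_if_sgn_eq)
  then have "\<exists>!Y. M ** Y + B ** mat_abs Y = F"
    using strict by (rule ex1_mult_plus_abs_mult_eq)
  then show ?thesis
    using ex1_bij_comp_iff[OF bij_matrix_mult_left[OF assms(1)], of "\<lambda>Y. M ** Y + B ** mat_abs Y = F"]
    by (simp add: M_def matrix_mult_inv_cancel assms(1))
qed

end
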